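(* Let $a\ge 0$, $b$ integers and $0\le k\le a$. Let $a_1,a_2,b_1,b_2$ be integers with $0\le a_1,a_2$, $0\le b_1,b_2$, $a_1+a_2=a-k$, $b_1+b_2=b+2k$. Then $$\sum_{i=0}^{k}\binom{b_1}{i}\binom{b_2}{k-i}\,\Phi(i)=\binom{b+2k}{k}\phi_{2_1}(a_1,b_1)+\binom{b+2k-2}{k-1}\phi_{2_2}(a_1,b_1),$$ where, with $j=k-i$ and $M=4a+2b-4$, $$\Phi(i)=(2a_1+b_1)(2a_2+b_2)(a_1b_2+a_2b_1+2a_1a_2+b_2i+b_1j-2ij)\binom{M}{4a_1+2b_1-2}-(2a_1+b_1)^2(a_1b_2+a_2b_1+2a_1a_2+b_2i+b_1j-2ij)\binom{M}{4a_1+2b_1-1},$$ $$\phi_{2_1}(a_1,b_1)=(2a_1+b_1)(2a_2+b_2)(a_1b_2+a_2b_1+2a_1a_2)\binom{M}{4a_1+2b_1-2}-(2a_1+b_1)^2(a_1b_2+a_2b_1+2a_1a_2)\binom{M}{4a_1+2b_1-1},$$ $$\phi_{2_2}(a_1,b_1)=2(2a_1+b_1)(2a_2+b_2)b_1b_2\binom{M}{4a_1+2b_1-2}-2(2a_1+b_1)^2b_1b_2\binom{M}{4a_1+2b_1-1}.$$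
   Context: Binomial coefficients $\binom{N}{j}$ are $0$ for $j<0$ or $j>N$; $\binom{b+2k-2}{k-1}=0$ for $k=0$. ($\Phi(i)$ equals the $\mathbb{F}_0$ Kontsevich coefficient $\phi_0(a_1+i,a_1+b_1-i)$ computed for the splitting $(a_1+i,b_1-2i)+(a_2+j,b_2-2j)=(a,b)$.) *)

theory Defs
  imports Main
begin

definition ibinom :: "int \<Rightarrow> int \<Rightarrow> int" where
  "ibinom N j = (if 0 \<le> j \<and> j \<le> N then int (nat N choose nat j) else 0)"

definition PhiK :: "int \<Rightarrow> int \<Rightarrow> int \<Rightarrow> int \<Rightarrow> int \<Rightarrow> int \<Rightarrow> int \<Rightarrow> int \<Rightarrow> int" where
  "PhiK a b k a1 a2 b1 b2 i =
     (let j = k - i; M = 4*a + 2*b - 4;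
          L = a1*b2 + a2*b1 + 2*a1*a2 + b2*i + b1*j - 2*i*j in
      (2*a1 + b1) * (2*a2 + b2) * L * ibinom M (4*a1 + 2*b1 - 2)
      - (2*a1 + b1)^2 * L * ibinom M (4*a1 + 2*b1 - 1))"

definition phi21 :: "int \<Rightarrow> int \<Rightarrow> int \<Rightarrow> int \<Rightarrow> int \<Rightarrow> int \<Rightarrow> int" where
  "phi21 a b a1 a2 b1 b2 =
     (let M = 4*a + 2*b - 4; L = a1*b2 + a2*b1 + 2*a1*a2 in
      (2*a1 + b1) * (2*a2 + b2) * L * ibinom M (4*a1 + 2*b1 - 2)
      - (2*a1 + b1)^2 * L * ibinom M (4*a1 + 2*b1 - 1))"

definition phi22 :: "int \<Rightarrow> int \<Rightarrow> int \<Rightarrow> int \<Rightarrow> int \<Rightarrow> int \<Rightarrow> int" where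
  "phi22 a b a1 a2 b1 b2 =
     (let M = 4*a + 2*b - 4 in
      2 * (2*a1 + b1) * (2*a2 + b2) * b1 * b2 * ibinom M (4*a1 + 2*b1 - 2)
      - 2 * (2*a1 + b1)^2 * b1 * b2 * ibinom M (4*a1 + 2*b1 - 1))"

end

theory Submission imports Defs begin

(*
  The three Kontsevich-type expressions PhiK, phi21 and phi22 share one common factor
  F = (2a1+b1)(2a2+b2) binom(M, 4a1+2b1-2) - (2a1+b1)^2 binom(M, 4a1+2b1-1):
  PhiK(i) = (L0 + w(i)) F,  phi21 = L0 F,  phi22 = 2 b1 b2 F,  where L0 = a1 b2 + a2 b1 + 2 a1 a2
  and w(i) = b2 i + b1 j - 2 i j with j = k - i.  Since b1 + b2 = b + 2k, the theorem reduces
  to the binomial convolution identity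
     sum_{i+j=k} C(b1,i) C(b2,j) (L0 + w(i)) = C(b1+b2,k) L0 + 2 b1 b2 C(b1+b2-2,k-1).
  The constant part is Vandermonde's identity.  For the weight we write
  w(i) = i (b2 - j) + j (b1 - i); the absorption identities i C(b1,i) = b1 C(b1-1,i-1) and
  (b2-j) C(b2,j) = b2 C(b2-1,j) turn the first part into b1 b2 times a Vandermonde sum equal
  to C(b1+b2-2,k-1), and the second part is the same sum with the roles of b1, b2 exchanged
  (reflect i to k - i).
*)

lemma ibinom_of_nat: "ibinom (int n) (int j) = int (n choose j)"
  unfolding ibinom_def by auto

lemma ibinom_negative: "j < 0 \<Longrightarrow> ibinom N j = 0"
  unfolding ibinom_def by simp

text \<open>Integer form of the absorption identity's left-hand side: the factor \<open>n - j\<close> may be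
  taken with integer subtraction because \<open>n choose j\<close> vanishes for \<open>j > n\<close>.\<close>
lemma binomial_times_int_diff:
  "int (n choose j) * (int n - int j) = int ((n - j) * (n choose j))"
  by (cases "j \<le> n") (simp_all add: of_nat_diff)

lemma sum_atMost_reflect:
  fixes f :: "nat \<Rightarrow> 'a::comm_monoid_add"
  shows "(\<Sum>i\<le>N. f i) = (\<Sum>i\<le>N. f (N - i))"
  unfolding atMost_atLeast0 by (subst sum.atLeastAtMost_rev) simp

lemma sum_int_interval:
  "(\<Sum>i = 0..int K. g i) = (\<Sum>i\<le>K. g (int i))"
proof -
  have "(\<Sum>i = 0..int K. g i) = sum g (int ` {0..K})"
    by (simp add: image_int_atLeastAtMost)
  also have "\<dots> = (\<Sum>i\<le>K. g (int i))"
    by (simp add: sum.reindex atMost_atLeast0)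
  finally show ?thesis .
qed

text \<open>Weighting each term of Vandermonde's convolution by \<open>i (n - j)\<close> (where \<open>i + j = K + 1\<close>)
  and absorbing both factors into the binomials lowers both upper indices by one.\<close>
lemma vandermonde_absorbed:
  fixes m n K :: nat
  shows "(\<Sum>i\<le>Suc K. i * (n - (Suc K - i)) * (m choose i) * (n choose (Suc K - i)))
         = m * n * ((m - 1 + (n - 1)) choose K)"
proof (cases m)
  case 0
  have vanish: "i * (n - (Suc K - i)) * (0 choose i) * (n choose (Suc K - i)) = 0" for i
    by (cases i) simp_all
  show ?thesis unfolding 0 vanish by simp
next
  case (Suc p)
  have "(\<Sum>i\<le>Suc K. i * (n - (Suc K - i)) * (m choose i) * (n choose (Suc K - i)))
        = (\<Sum>i\<le>K. (Suc i * (Suc p choose Suc i)) * ((n - (K - i)) * (n choose (K - i))))"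
    unfolding sum.atMost_Suc_shift diff_Suc_Suc Suc by (simp del: binomial_Suc_Suc add: algebra_simps)
  also have "\<dots> = (\<Sum>i\<le>K. m * n * ((p choose i) * ((n - 1) choose (K - i))))"
    unfolding Suc_times_binomial binomial_absorb_comp Suc by (simp add: algebra_simps)
  also have "\<dots> = m * n * ((p + (n - 1)) choose K)"
    by (simp only: sum_distrib_left[symmetric] vandermonde)
  finally show ?thesis using Suc by simp
qed

text \<open>The same identity for every \<open>K\<close>, stated with the integer binomial, which absorbs the
  degenerate cases \<open>K = 0\<close>, \<open>m = 0\<close> and \<open>n = 0\<close>.\<close>
lemma vandermonde_absorbed_int:
  fixes m n K :: nat
  shows "(\<Sum>i\<le>K. int (i * (n - (K - i)) * (m choose i) * (n choose (K - i))))
         = int m * int n * ibinom (int m + int n - 2) (int K - 1)"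
proof (cases K)
  case 0
  then show ?thesis by (simp add: ibinom_negative)
next
  case (Suc K')
  have "(\<Sum>i\<le>K. int (i * (n - (K - i)) * (m choose i) * (n choose (K - i))))
        = int (m * n * ((m - 1 + (n - 1)) choose K'))"
    unfolding Suc of_nat_sum[symmetric] vandermonde_absorbed ..
  also have "\<dots> = int m * int n * ibinom (int m + int n - 2) (int K - 1)"
  proof (cases "m = 0 \<or> n = 0")
    case False
    then have "int m + int n - 2 = int (m - 1 + (n - 1))" and "int K - 1 = int K'"
      using Suc by auto
    then show ?thesis by (simp only: ibinom_of_nat of_nat_mult)
  qed auto
  finally show ?thesis .
qed

text \<open>The weight \<open>b2 i + b1 j - 2 i j\<close> (with \<open>j = K - i\<close>) splits as \<open>i (b2 - j) + j (b1 - i)\<close>;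
  against \<open>C(b1,i) C(b2,j)\<close> both pieces are natural-number absorbed Vandermonde terms.\<close>
lemma convolution_term_split:
  fixes B1 B2 K i :: nat and L0 :: int
  assumes "i \<le> K"
  shows "int (B1 choose i) * int (B2 choose (K - i)) *
           (L0 + int B2 * int i + int B1 * (int K - int i) - 2 * int i * (int K - int i))
         = L0 * int ((B1 choose i) * (B2 choose (K - i)))
           + int (i * (B2 - (K - i)) * (B1 choose i) * (B2 choose (K - i)))
           + int ((K - i) * (B1 - i) * (B2 choose (K - i)) * (B1 choose i))"
proof -
  define j where "j = K - i"
  have j: "int K - int i = int j" using assms unfolding j_def by simp
  have "int (B1 choose i) * int (B2 choose j) *
          (L0 + int B2 * int i + int B1 * int j - 2 * int i * int j)
        = L0 * int ((B1 choose i) * (B2 choose j))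
          + int i * int (B1 choose i) * (int (B2 choose j) * (int B2 - int j))
          + int j * int (B2 choose j) * (int (B1 choose i) * (int B1 - int i))"
    by (simp add: algebra_simps)
  then show ?thesis
    unfolding j binomial_times_int_diff by (simp add: j_def ac_simps)
qed

lemma weighted_vandermonde:
  fixes B1 B2 K :: nat and L0 :: int
  shows "(\<Sum>i\<le>K. int (B1 choose i) * int (B2 choose (K - i)) *
           (L0 + int B2 * int i + int B1 * (int K - int i) - 2 * int i * (int K - int i)))
         = int ((B1 + B2) choose K) * L0
           + 2 * int B1 * int B2 * ibinom (int B1 + int B2 - 2) (int K - 1)"
proof -
  have reflected:
    "(\<Sum>i\<le>K. int ((K - i) * (B1 - i) * (B2 choose (K - i)) * (B1 choose i)))
     = (\<Sum>i\<le>K. int (i * (B1 - (K - i)) * (B2 choose i) * (B1 choose (K - i))))"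
    by (subst sum_atMost_reflect) (rule sum.cong, auto)
  have "(\<Sum>i\<le>K. int (B1 choose i) * int (B2 choose (K - i)) *
           (L0 + int B2 * int i + int B1 * (int K - int i) - 2 * int i * (int K - int i)))
        = L0 * int (\<Sum>i\<le>K. (B1 choose i) * (B2 choose (K - i)))
          + (\<Sum>i\<le>K. int (i * (B2 - (K - i)) * (B1 choose i) * (B2 choose (K - i))))
          + (\<Sum>i\<le>K. int ((K - i) * (B1 - i) * (B2 choose (K - i)) * (B1 choose i)))"
    by (simp add: convolution_term_split sum.distrib sum_distrib_left)
  also have "\<dots> = L0 * int ((B1 + B2) choose K)
      + int B1 * int B2 * ibinom (int B1 + int B2 - 2) (int K - 1)
      + int B2 * int B1 * ibinom (int B2 + int B1 - 2) (int K - 1)"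
    unfolding reflected vandermonde vandermonde_absorbed_int ..
  finally show ?thesis by (simp add: algebra_simps)
qed

definition kontsevich_factor :: "int \<Rightarrow> int \<Rightarrow> int \<Rightarrow> int \<Rightarrow> int \<Rightarrow> int \<Rightarrow> int" where
  "kontsevich_factor a b a1 a2 b1 b2 =
     (let M = 4*a + 2*b - 4 in
      (2*a1 + b1) * (2*a2 + b2) * ibinom M (4*a1 + 2*b1 - 2)
      - (2*a1 + b1)^2 * ibinom M (4*a1 + 2*b1 - 1))"

lemma PhiK_factor:
  "PhiK a b k a1 a2 b1 b2 i =
     (a1*b2 + a2*b1 + 2*a1*a2 + b2*i + b1*(k - i) - 2*i*(k - i))
     * kontsevich_factor a b a1 a2 b1 b2"
  unfolding PhiK_def kontsevich_factor_def Let_def by (simp add: algebra_simps)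

lemma phi21_factor:
  "phi21 a b a1 a2 b1 b2 = (a1*b2 + a2*b1 + 2*a1*a2) * kontsevich_factor a b a1 a2 b1 b2"
  unfolding phi21_def kontsevich_factor_def Let_def by (simp add: algebra_simps)

lemma phi22_factor:
  "phi22 a b a1 a2 b1 b2 = 2 * b1 * b2 * kontsevich_factor a b a1 a2 b1 b2"
  unfolding phi22_def kontsevich_factor_def Let_def by (simp add: algebra_simps)

theorem mainTheorem8:
  fixes a b k a1 a2 b1 b2 :: int
  assumes "0 \<le> a" and "0 \<le> k" and "k \<le> a"
    and "0 \<le> a1" and "0 \<le> a2" and "0 \<le> b1" and "0 \<le> b2"
    and "a1 + a2 = a - k" and "b1 + b2 = b + 2*k"
  shows "(\<Sum>i = 0..k. ibinom b1 i * ibinom b2 (k - i) * PhiK a b k a1 a2 b1 b2 i)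
         = ibinom (b + 2*k) k * phi21 a b a1 a2 b1 b2
           + ibinom (b + 2*k - 2) (k - 1) * phi22 a b a1 a2 b1 b2"
proof -
  obtain K B1 B2 where K: "k = int K" and B1: "b1 = int B1" and B2: "b2 = int B2"
    using \<open>0 \<le> k\<close> \<open>0 \<le> b1\<close> \<open>0 \<le> b2\<close> by (metis nonneg_eq_int)
  have upper: "b + 2*k = int (B1 + B2)"
    using \<open>b1 + b2 = b + 2*k\<close> B1 B2 by simp
  define F where "F = kontsevich_factor a b a1 a2 b1 b2"
  define L0 where "L0 = a1*b2 + a2*b1 + 2*a1*a2"
  have summand: "ibinom b1 (int i) * ibinom b2 (int K - int i) * PhiK a b (int K) a1 a2 b1 b2 (int i)
      = int (B1 choose i) * int (B2 choose (K - i)) *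
          (L0 + int B2 * int i + int B1 * (int K - int i) - 2 * int i * (int K - int i)) * F"
    if "i \<le> K" for i
  proof -
    have "int K - int i = int (K - i)" using that by simp
    then have "ibinom b2 (int K - int i) = int (B2 choose (K - i))"
      unfolding B2 by (simp only: ibinom_of_nat)
    then show ?thesis
      unfolding PhiK_factor B1 B2 F_def L0_def ibinom_of_nat by (simp only: mult.assoc)
  qed
  have "(\<Sum>i = 0..k. ibinom b1 i * ibinom b2 (k - i) * PhiK a b k a1 a2 b1 b2 i)
        = (\<Sum>i\<le>K. int (B1 choose i) * int (B2 choose (K - i)) *
             (L0 + int B2 * int i + int B1 * (int K - int i) - 2 * int i * (int K - int i))) * F"
    unfolding K sum_int_interval sum_distrib_right by (rule sum.cong) (simp_all add: summand)
  also have "\<dots> = ibinom (b + 2*k) k * phi21 a b a1 a2 b1 b2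
           + ibinom (b + 2*k - 2) (k - 1) * phi22 a b a1 a2 b1 b2"
  proof -
    have "ibinom (b + 2*k) k = int ((B1 + B2) choose K)"
      unfolding upper by (simp only: K ibinom_of_nat)
    moreover have "ibinom (b + 2*k - 2) (k - 1) = ibinom (int B1 + int B2 - 2) (int K - 1)"
      using upper K by simp
    ultimately show ?thesis
      unfolding weighted_vandermonde phi21_factor phi22_factor F_def[symmetric] L0_def[symmetric]
      by (simp add: B1 B2 algebra_simps)
  qed
  finally show ?thesis .
qed

end
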